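(* Let $\sigma$ be a strategy on an arena $A$. If $sm\in\sigma$ and $tn\in\sigma$ (with $m,n$ single move occurrences) and $\mathrm{GR}(s)=\mathrm{GR}(t)$, then there exists an $\mathcal O$-renaming $\varsigma$ such that $sm=(tn)\varsigma$.
   Context: First-order variables are split into three disjoint countable sets: $\mathcal A$-, $\mathcal O$- and $\mathcal P$-variables. $\mathcal{AP}$-terms (resp. $\mathcal{OP}$-terms) are first-order terms built from $\mathcal A$- and $\mathcal P$-variables (resp. $\mathcal O$- and $\mathcal P$-variables). Arena: a finite forest whose nodes (moves) carry a first-order label (a list of $\mathcal A$-variables, all distinct across the arena) and an atomic label (a list of atomic formulas $X\,t_1\dots t_k$ with $\mathcal{AP}$-terms whose $\mathcal A$-variables occur in the first-order label of the node or an ancestor). Polarity is depth parity: even = Opponent (O), odd = Player (P); roots are initial. Justified sequence: finite sequence of move occurrences; each non-initial occurrence has a $\lambda$-pointer to an earlier occurrence of its father; each element of the atomic label of an occurrence has at most one $\mu$-pointer to an element of the atomic label of an earlier occurrence of opposite polarity. Instantiations: each O-move occurrence carries an $\mathcal O$-instantiation (list of $\mathcal O$-variables of the length of its first-order label), each P-move occurrence a $\mathcal P$-instantiation (list of $\mathcal{OP}$-terms of that length); all $\mathcal O$-variables in $\mathcal O$-instantiations distinct. For an occurrence $m$ with instantiation $[t_1..t_k]$ and first-order label $[x_1..x_k]$, $\theta_m=\{x_i\mapsto t_i\}$ if $m$ is initial, else $\theta_n\cup\{x_i\mapsto t_i\}$ with $n$ its $\lambda$-justifier. Play: instantiated justified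 sequence with alternating polarities, no $\mu$-pointers from O-moves, exactly one $\mu$-pointer from each element of the atomic label of each P-move, every $\mu$-pointer from $X\,t_1..t_k$ at $m$ to $Y\,u_1..u_p$ at $n$ satisfying $X=Y$, $k=p$, $t_i\theta_m=u_i\theta_n$, and every $\mathcal O$-variable in a $\mathcal P$-instantiation occurring in an earlier $\mathcal O$-instantiation. An $\mathcal O$-renaming is an injection $\varsigma$ of $\mathcal O$-variables into themselves; $s\varsigma$ replaces each $o$ by $\varsigma(o)$ in all instantiations. Strategy: non-empty set of even-length plays closed under even-length prefixes, deterministic ($sm,sn\in\sigma\Rightarrow sm=sn$, including pointers and instantiations) and uniform (closed under $\mathcal O$-renamings). $\mathrm{GR}(s)$ is the sequence obtained from a play $s$ by erasing all instantiations and all $\mu$-pointers (keeping moves and $\lambda$-pointers). *)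

theory Defs
  imports Main
begin

datatype var = AV nat | OV nat | PV nat

datatype trm = Var var | Fn nat "trm list"

fun tvars :: "trm \<Rightarrow> var set" where
  "tvars (Var v) = {v}"
| "tvars (Fn f ts) = \<Union> (set (map tvars ts))"

fun tsubst :: "(var \<Rightarrow> trm) \<Rightarrow> trm \<Rightarrow> trm" where
  "tsubst \<rho> (Var v) = \<rho> v"
| "tsubst \<rho> (Fn f ts) = Fn f (map (tsubst \<rho>) ts)"

definition is_AV :: "var \<Rightarrow> bool" where "is_AV v \<longleftrightarrow> (\<exists>x. v = AV x)"
definition is_OV :: "var \<Rightarrow> bool" where "is_OV v \<longleftrightarrow> (\<exists>x. v = OV x)"
definition is_PV :: "var \<Rightarrow> bool" where "is_PV v \<longleftrightarrow> (\<exists>x. v = PV x)"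

definition OP_term :: "trm \<Rightarrow> bool" where
  "OP_term t \<longleftrightarrow> (\<forall>v\<in>tvars t. is_OV v \<or> is_PV v)"

text \<open>An atomic formula: a predicate symbol X applied to a list of terms.\<close>
type_synonym atom = "nat \<times> trm list"

text \<open>A forest of moves given by a parent function; first-order labels are lists of
  A-variables (given by their indices); atomic labels are lists of atomic formulas.\<close>
record 'm arena =
  moves :: "'m set"
  par   :: "'m \<Rightarrow> 'm option"
  fol   :: "'m \<Rightarrow> nat list"
  atl   :: "'m \<Rightarrow> atom list"

definition parrel :: "'m arena \<Rightarrow> ('m \<times> 'm) set" where
  "parrel A = {(p, m). m \<in> moves A \<and> par A m = Some p}"

definition ancestors :: "'m arena \<Rightarrow> 'm \<Rightarrow> 'm set" where
  "ancestors A m = {p. (p, m) \<in> (parrel A)\<^sup>+}"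

definition depth :: "'m arena \<Rightarrow> 'm \<Rightarrow> nat" where
  "depth A m = card (ancestors A m)"

definition is_O :: "'m arena \<Rightarrow> 'm \<Rightarrow> bool" where
  "is_O A m \<longleftrightarrow> even (depth A m)"

definition initial :: "'m arena \<Rightarrow> 'm \<Rightarrow> bool" where
  "initial A m \<longleftrightarrow> par A m = None"

definition arena :: "'m arena \<Rightarrow> bool" where
  "arena A \<longleftrightarrow>
     finite (moves A) \<and>
     (\<forall>m\<in>moves A. \<forall>p. par A m = Some p \<longrightarrow> p \<in> moves A) \<and>
     wf (parrel A) \<and>
     (\<forall>m\<in>moves A. distinct (fol A m)) \<and>
     (\<forall>m\<in>moves A. \<forall>m'\<in>moves A. m \<noteq> m' \<longrightarrow> set (fol A m) \<inter> set (fol A m') = {}) \<and>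
     (\<forall>m\<in>moves A. \<forall>a\<in>set (atl A m). \<forall>t\<in>set (snd a). \<forall>v\<in>tvars t.
        is_PV v \<or> (\<exists>x. v = AV x \<and> (\<exists>p\<in>insert m (ancestors A m). x \<in> set (fol A p))))"

text \<open>A move occurrence: the move, its lambda-pointer (index of an earlier occurrence),
  one optional mu-pointer per element of the atomic label (pointing to
  (occurrence index, atom index)), and its instantiation.\<close>
record 'm occ =
  mv   :: 'm
  jp   :: "nat option"
  mup  :: "(nat \<times> nat) option list"
  inst :: "trm list"

type_synonym subst = "nat \<Rightarrow> trm option"   \<comment> \<open>partial map on A-variable indices\<close>

definition theta_step :: "'m arena \<Rightarrow> subst list \<Rightarrow> 'm occ \<Rightarrow> subst list" where
  "theta_step A acc oc =
     acc @ [(case jp oc of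
               Some j \<Rightarrow> (if j < length acc then acc ! j else Map.empty)
             | None \<Rightarrow> Map.empty) ++ map_of (zip (fol A (mv oc)) (inst oc))]"

text \<open>thetas A s ! i is the substitution theta of the i-th occurrence.\<close>
definition thetas :: "'m arena \<Rightarrow> 'm occ list \<Rightarrow> subst list" where
  "thetas A s = foldl (theta_step A) [] s"

definition apply_subst :: "subst \<Rightarrow> trm \<Rightarrow> trm" where
  "apply_subst \<theta> t = tsubst (\<lambda>v. case v of AV x \<Rightarrow> (case \<theta> x of Some u \<Rightarrow> u | None \<Rightarrow> Var (AV x))
                                        | _ \<Rightarrow> Var v) t"

definition occ_O :: "'m arena \<Rightarrow> 'm occ \<Rightarrow> bool" where
  "occ_O A oc \<longleftrightarrow> is_O A (mv oc)"

definition Oinst_vars :: "'m occ \<Rightarrow> nat list" where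
  "Oinst_vars oc = map (\<lambda>t. case t of Var (OV x) \<Rightarrow> x | _ \<Rightarrow> 0) (inst oc)"

definition justified :: "'m arena \<Rightarrow> 'm occ list \<Rightarrow> bool" where
  "justified A s \<longleftrightarrow>
    (\<forall>i < length s.
       mv (s!i) \<in> moves A \<and>
       (case par A (mv (s!i)) of
          None \<Rightarrow> jp (s!i) = None
        | Some p \<Rightarrow> (\<exists>j < i. jp (s!i) = Some j \<and> mv (s!j) = p)) \<and>
       length (mup (s!i)) = length (atl A (mv (s!i))) \<and>
       (\<forall>ptr \<in> set (mup (s!i)). \<forall>j k. ptr = Some (j, k) \<longrightarrow>
          j < i \<and> k < length (atl A (mv (s!j))) \<and> (occ_O A (s!j) \<noteq> occ_O A (s!i))))"

definition instantiated :: "'m arena \<Rightarrow> 'm occ list \<Rightarrow> bool" where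
  "instantiated A s \<longleftrightarrow>
    justified A s \<and>
    (\<forall>i < length s. length (inst (s!i)) = length (fol A (mv (s!i))) \<and>
       (if occ_O A (s!i) then (\<forall>t\<in>set (inst (s!i)). \<exists>x. t = Var (OV x))
        else (\<forall>t\<in>set (inst (s!i)). OP_term t))) \<and>
    distinct (concat (map Oinst_vars (filter (occ_O A) s)))"

definition play :: "'m arena \<Rightarrow> 'm occ list \<Rightarrow> bool" where
  "play A s \<longleftrightarrow>
    instantiated A s \<and>
    (\<forall>i. Suc i < length s \<longrightarrow> occ_O A (s!Suc i) \<noteq> occ_O A (s!i)) \<and>
    (\<forall>i < length s. occ_O A (s!i) \<longrightarrow> (\<forall>ptr\<in>set (mup (s!i)). ptr = None)) \<and>
    (\<forall>i < length s. \<not> occ_O A (s!i) \<longrightarrow> (\<forall>ptr\<in>set (mup (s!i)). ptr \<noteq> None)) \<and>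
    (\<forall>i < length s. \<forall>a < length (mup (s!i)). \<forall>j k. mup (s!i) ! a = Some (j, k) \<longrightarrow>
       (let (X, ts) = atl A (mv (s!i)) ! a; (Y, us) = atl A (mv (s!j)) ! k in
        X = Y \<and> length ts = length us \<and>
        map (apply_subst (thetas A s ! i)) ts = map (apply_subst (thetas A s ! j)) us)) \<and>
    (\<forall>i < length s. \<not> occ_O A (s!i) \<longrightarrow>
       (\<forall>t\<in>set (inst (s!i)). \<forall>x. OV x \<in> tvars t \<longrightarrow>
          (\<exists>j < i. occ_O A (s!j) \<and> Var (OV x) \<in> set (inst (s!j)))))"

definition rename_trm :: "(nat \<Rightarrow> nat) \<Rightarrow> trm \<Rightarrow> trm" where
  "rename_trm \<rho> t = tsubst (\<lambda>v. case v of OV x \<Rightarrow> Var (OV (\<rho> x)) | _ \<Rightarrow> Var v) t"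

definition rename :: "(nat \<Rightarrow> nat) \<Rightarrow> 'm occ list \<Rightarrow> 'm occ list" where
  "rename \<rho> s = map (\<lambda>oc. oc\<lparr>inst := map (rename_trm \<rho>) (inst oc)\<rparr>) s"

definition O_renaming :: "(nat \<Rightarrow> nat) \<Rightarrow> bool" where
  "O_renaming \<rho> \<longleftrightarrow> inj \<rho>"

definition strategy :: "'m arena \<Rightarrow> 'm occ list set \<Rightarrow> bool" where
  "strategy A \<sigma> \<longleftrightarrow>
    \<sigma> \<noteq> {} \<and>
    (\<forall>s\<in>\<sigma>. play A s \<and> even (length s)) \<and>
    (\<forall>s\<in>\<sigma>. \<forall>n. even n \<longrightarrow> take n s \<in> \<sigma>) \<and>
    (\<forall>s a b. s @ [a] \<in> \<sigma> \<longrightarrow> s @ [b] \<in> \<sigma> \<longrightarrow> a = b) \<and>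
    (\<forall>s\<in>\<sigma>. \<forall>\<rho>. O_renaming \<rho> \<longrightarrow> rename \<rho> s \<in> \<sigma>)"

definition GR :: "'m occ list \<Rightarrow> ('m \<times> nat option) list" where
  "GR s = map (\<lambda>oc. (mv oc, jp oc)) s"

end

theory Submission
  imports Defs
begin

(* In a play, Opponent occurrences sit exactly at the even positions,
   carry no mu-pointers, and are instantiated by pairwise distinct O-variables.
   Hence, if two plays of equal length agree on the moves and lambda-pointers of their
   O-occurrences, the lists of O-variables they introduce are distinct lists of the same
   shape, and one injection of the O-variables maps the first list onto the second; after
   this O-renaming the two plays agree on all O-occurrences.  A strategy is deterministic,
   so two of its plays that agree on all O-occurrences agree on all P-occurrences too. *)

text \<open>Two distinct lists of the same length are related by an injective renaming; the
  renaming is built element by element, composing with the swap of the new head's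
  target and its old image.\<close>
lemma distinct_lists_renaming:
  fixes xs ys :: "'a list"
  assumes "distinct xs" "distinct ys" "length xs = length ys"
  shows "\<exists>\<rho>. inj \<rho> \<and> map \<rho> xs = ys"
  using assms
proof (induction xs arbitrary: ys)
  case Nil
  then show ?case by (auto intro: inj_on_id)
next
  case (Cons x xs)
  then obtain y ys' where ys: "ys = y # ys'" by (cases ys) auto
  with Cons obtain \<rho> where inj: "inj \<rho>" and map: "map \<rho> xs = ys'" by auto
  define sw where "sw w = (if w = \<rho> x then y else if w = y then \<rho> x else w)" for w
  define \<rho>' where "\<rho>' = sw \<circ> \<rho>"
  have "\<rho>' x = y" by (simp add: \<rho>'_def sw_def)
  moreover have "\<rho>' z = \<rho> z" if "z \<in> set xs" for z
  proof -
    have "\<rho> z \<in> set ys'" using map that by auto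
    then have "\<rho> z \<noteq> y" using Cons.prems(2) ys by auto
    moreover have "\<rho> z \<noteq> \<rho> x" using inj that Cons.prems(1) by (auto dest: injD)
    ultimately show ?thesis by (simp add: \<rho>'_def sw_def)
  qed
  moreover have "inj \<rho>'"
  proof -
    have "sw (sw w) = w" for w by (simp add: sw_def)
    then have "inj sw" by (rule inj_on_inverseI)
    then show ?thesis using inj by (simp add: \<rho>'_def inj_compose)
  qed
  ultimately show ?case using map ys by (auto intro!: exI[of _ \<rho>'])
qed

lemma map_concat_blocks:
  assumes "map f (concat xss) = concat yss"
    and "list_all2 (\<lambda>xs ys. length xs = length ys) xss yss"
  shows "map (map f) xss = yss"
  using assms(2,1)
proof (induction xss yss rule: list_all2_induct)
  case Nil
  then show ?case by simp
next
  case (Cons xs xss ys yss)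
  then have "map f xs @ map f (concat xss) = ys @ concat yss" by simp
  then have "map f xs = ys" "map f (concat xss) = concat yss"
    using \<open>length xs = length ys\<close> by (simp_all add: append_eq_append_conv)
  with Cons.IH show ?case by simp
qed

lemma distinct_blocks_renaming:
  fixes xss yss :: "'a list list"
  assumes "distinct (concat xss)" "distinct (concat yss)"
    and shape: "list_all2 (\<lambda>xs ys. length xs = length ys) xss yss"
  shows "\<exists>\<rho>. inj \<rho> \<and> map (map \<rho>) xss = yss"
proof -
  have "length (concat xss) = length (concat yss)"
    using shape by (induction xss yss rule: list_all2_induct) auto
  with assms obtain \<rho> where "inj \<rho>" "map \<rho> (concat xss) = concat yss"
    using distinct_lists_renaming by blast
  then show ?thesis using map_concat_blocks[OF _ shape] by blast
qed

lemma ancestors_initial: "par A m = None \<Longrightarrow> ancestors A m = {}"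
  unfolding ancestors_def parrel_def by (auto elim: tranclE)

text \<open>A play starts with an initial move, which is an O-move, and then alternates; so
  O-occurrences are exactly those at even positions.\<close>
lemma play_O_iff_even:
  assumes "play A s" "i < length s"
  shows "occ_O A (s!i) \<longleftrightarrow> even i"
  using assms(2)
proof (induction i)
  case 0
  have "justified A s" using assms(1) by (simp add: play_def instantiated_def)
  then have "case par A (mv (s!0)) of None \<Rightarrow> jp (s!0) = None
        | Some p \<Rightarrow> (\<exists>j < 0. jp (s!0) = Some j \<and> mv (s!j) = p)"
    using 0 unfolding justified_def by blast
  then have "par A (mv (s!0)) = None" by (auto split: option.splits)
  then show ?case by (simp add: occ_O_def is_O_def depth_def ancestors_initial)
next
  case (Suc i)
  moreover have "occ_O A (s!Suc i) \<noteq> occ_O A (s!i)"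
    using assms(1) Suc.prems by (simp add: play_def)
  ultimately show ?case by auto
qed

lemma play_O_occurrence:
  assumes "play A s" "i < length s" "occ_O A (s!i)"
  shows "mup (s!i) = replicate (length (atl A (mv (s!i)))) None"
    and "inst (s!i) = map (\<lambda>x. Var (OV x)) (Oinst_vars (s!i))"
    and "length (Oinst_vars (s!i)) = length (fol A (mv (s!i)))"
proof -
  have mup: "length (mup (s!i)) = length (atl A (mv (s!i)))" "\<forall>p\<in>set (mup (s!i)). p = None"
    and inst: "length (inst (s!i)) = length (fol A (mv (s!i)))"
      "\<forall>t\<in>set (inst (s!i)). \<exists>x. t = Var (OV x)"
    using assms unfolding play_def instantiated_def justified_def by auto
  from mup show "mup (s!i) = replicate (length (atl A (mv (s!i)))) None"
    using replicate_length_same[of "mup (s!i)" None] by simp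
  have "map (\<lambda>x. Var (OV x)) (Oinst_vars (s!i)) = inst (s!i)"
    unfolding Oinst_vars_def map_map using inst(2) by (intro map_idI) auto
  then show "inst (s!i) = map (\<lambda>x. Var (OV x)) (Oinst_vars (s!i))" by simp
  from inst(1) show "length (Oinst_vars (s!i)) = length (fol A (mv (s!i)))"
    by (simp add: Oinst_vars_def)
qed

definition O_vars :: "'m arena \<Rightarrow> 'm occ list \<Rightarrow> nat list list" where
  "O_vars A s = map (\<lambda>oc. if occ_O A oc then Oinst_vars oc else []) s"

text \<open>Filtering before concatenating is the same as replacing filtered-out blocks by
  empty ones; this connects the distinctness clause of plays with O_vars.\<close>
lemma concat_map_filter: "concat (map f (filter P xs)) = concat (map (\<lambda>x. if P x then f x else []) xs)"
  by (induction xs) auto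

lemma play_O_vars_distinct: "play A s \<Longrightarrow> distinct (concat (O_vars A s))"
  unfolding O_vars_def play_def instantiated_def by (simp add: concat_map_filter)

lemma rename_nth:
  "i < length s \<Longrightarrow> rename \<rho> s ! i = (s!i)\<lparr>inst := map (rename_trm \<rho>) (inst (s!i))\<rparr>"
  by (simp add: rename_def)

lemma plays_O_renaming:
  assumes pu: "play A u" and pv: "play A v" and len: "length u = length v"
    and agree: "\<And>i. i < length u \<Longrightarrow> occ_O A (u!i) \<Longrightarrow> mv (v!i) = mv (u!i) \<and> jp (v!i) = jp (u!i)"
  shows "\<exists>\<rho>. O_renaming \<rho> \<and> (\<forall>i < length u. occ_O A (u!i) \<longrightarrow> rename \<rho> v ! i = u!i)"
proof -
  have same_O: "occ_O A (v!i) \<longleftrightarrow> occ_O A (u!i)" if "i < length u" for i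
    using play_O_iff_even[OF pu that] play_O_iff_even[OF pv] that len by simp
  have "list_all2 (\<lambda>xs ys. length xs = length ys) (O_vars A v) (O_vars A u)"
    using len same_O agree play_O_occurrence(3)[OF pu] play_O_occurrence(3)[OF pv]
    by (auto simp: O_vars_def list_all2_conv_all_nth)
  then obtain \<rho> where inj: "inj \<rho>" and ren: "map (map \<rho>) (O_vars A v) = O_vars A u"
    using distinct_blocks_renaming play_O_vars_distinct[OF pu] play_O_vars_distinct[OF pv]
    by blast
  have "rename \<rho> v ! i = u!i" if i: "i < length u" and O: "occ_O A (u!i)" for i
  proof -
    have Ov: "occ_O A (v!i)" and iv: "i < length v" using same_O i O len by auto
    have vars: "map \<rho> (Oinst_vars (v!i)) = Oinst_vars (u!i)"
      using arg_cong[OF ren, of "\<lambda>xss. xss!i"] i len O Ov by (simp add: O_vars_def)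
    have "map (rename_trm \<rho>) (inst (v!i)) = map (\<lambda>x. Var (OV x)) (map \<rho> (Oinst_vars (v!i)))"
      using play_O_occurrence(2)[OF pv iv Ov] by (simp add: rename_trm_def)
    then have "map (rename_trm \<rho>) (inst (v!i)) = inst (u!i)"
      using vars play_O_occurrence(2)[OF pu i O] by simp
    moreover have "mup (v!i) = mup (u!i)"
      using play_O_occurrence(1)[OF pv iv Ov] play_O_occurrence(1)[OF pu i O] agree[OF i O]
      by simp
    ultimately show ?thesis
      using rename_nth[OF iv] agree[OF i O] by (auto intro: occ.equality)
  qed
  then show ?thesis using inj unfolding O_renaming_def by blast
qed

text \<open>By determinacy, two plays of a strategy with the same length that agree on all
  O-occurrences are equal: each P-occurrence is the strategy's unique answer to the
  common preceding odd-length prefix.\<close>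
lemma strategy_determined_by_O:
  assumes st: "strategy A \<sigma>" and u: "u \<in> \<sigma>" and v: "v \<in> \<sigma>" and len: "length u = length v"
    and O: "\<And>i. i < length u \<Longrightarrow> occ_O A (u!i) \<Longrightarrow> u!i = v!i"
  shows "u = v"
proof -
  have pu: "play A u" using st u by (simp add: strategy_def)
  have prefix_closed: "\<And>w j. w \<in> \<sigma> \<Longrightarrow> even j \<Longrightarrow> take j w \<in> \<sigma>"
    and deterministic: "\<And>w a b. w @ [a] \<in> \<sigma> \<Longrightarrow> w @ [b] \<in> \<sigma> \<Longrightarrow> a = b"
    using st unfolding strategy_def by blast+
  have "take k u = take k v" if "k \<le> length u" for k
    using that
  proof (induction k)
    case 0
    show ?case by simp
  next
    case (Suc k)
    then have k: "k < length u" and IH: "take k u = take k v" by simp_all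
    have "u!k = v!k"
    proof (cases "occ_O A (u!k)")
      case True
      with O k show ?thesis by blast
    next
      case False
      then have "even (Suc k)" using play_O_iff_even[OF pu k] by simp
      then have "take (Suc k) u \<in> \<sigma>" "take (Suc k) v \<in> \<sigma>"
        using prefix_closed u v by blast+
      moreover have "take (Suc k) u = take k u @ [u!k]" "take (Suc k) v = take k u @ [v!k]"
        using k len IH by (simp_all add: take_Suc_conv_app_nth)
      ultimately show ?thesis using deterministic by metis
    qed
    then show ?case using IH k len by (simp add: take_Suc_conv_app_nth)
  qed
  from this[of "length u"] len show ?thesis by simp
qed

theorem mainTheorem8:
  fixes A :: "'m arena" and \<sigma> :: "'m occ list set"
    and s t :: "'m occ list" and m n :: "'m occ"
  assumes "arena A"
    and "strategy A \<sigma>"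
    and "s @ [m] \<in> \<sigma>"
    and "t @ [n] \<in> \<sigma>"
    and "GR s = GR t"
  shows "\<exists>\<rho>. O_renaming \<rho> \<and> s @ [m] = rename \<rho> (t @ [n])"
proof -
  have ps: "play A (s @ [m])" and even_s: "even (length (s @ [m]))"
    and pt: "play A (t @ [n])"
    using assms(2-4) unfolding strategy_def by auto
  have len: "length s = length t" using arg_cong[OF assms(5), of length] by (simp add: GR_def)
  text \<open>The last occurrence is a P-move, so O-occurrences lie in s, where GR s = GR t
    determines their moves and lambda-pointers.\<close>
  have agree_GR: "mv ((t @ [n])!i) = mv ((s @ [m])!i) \<and> jp ((t @ [n])!i) = jp ((s @ [m])!i)"
    if "i < length (s @ [m])" "occ_O A ((s @ [m])!i)" for i
  proof -
    have "\<not> occ_O A ((s @ [m]) ! length s)"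
      using play_O_iff_even[OF ps, of "length s"] even_s by simp
    then have "i < length s" using that by (cases "i = length s") auto
    then show ?thesis
      using arg_cong[OF assms(5), of "\<lambda>l. l!i"] len by (simp add: GR_def nth_append)
  qed
  have "length (s @ [m]) = length (t @ [n])" using len by simp
  from plays_O_renaming[OF ps pt this agree_GR] obtain \<rho> where \<rho>: "O_renaming \<rho>"
    and agree: "\<forall>i < length (s @ [m]). occ_O A ((s @ [m])!i) \<longrightarrow> rename \<rho> (t @ [n]) ! i = (s @ [m])!i"
    by blast
  have "rename \<rho> (t @ [n]) \<in> \<sigma>"
    using assms(2,4) \<rho> unfolding strategy_def by blast
  then have "s @ [m] = rename \<rho> (t @ [n])"
  proof (rule strategy_determined_by_O[OF assms(2,3)])
    show "length (s @ [m]) = length (rename \<rho> (t @ [n]))" using len by (simp add: rename_def)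
  qed (use agree in simp)
  with \<rho> show ?thesis by blast
qed

end
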